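(* Let $\varepsilon>0$ be a constant, $C=12/\varepsilon$, $c=1/(8e)$, and let $k\geq 2$ be a constant integer. Let $G=(V,E)$ be a graph on $n$ vertices with $\delta(G)\geq\left(\frac12+\varepsilon\right)n$, and let $L\subseteq V$ be a set with $|L|\leq C\log n$ such that every pair of distinct vertices of $V\setminus L$ has at least $12\log n$ common $G$-neighbors in $L$. Let $G_k'$ be the subgraph of $G_k$ induced by $V\setminus L$. Then with high probability: every component of $G_k'$ has at least $cn$ vertices, and moreover, for every set $A$ of $k-1$ vertices, removing $A$ from $G_k'$ produces a graph each of whose components is either an isolated vertex or has at least $cn$ vertices.
   Context: The random graph $G_k$ on vertex set $V$: each vertex $v\in V$ independently makes $k$ choices, each uniformly at random from the $G$-neighborhood of $v$ (with replacement), and $G_k$ has edge $\{v,w\}$ whenever $v$ chose $w$ or $w$ chose $v$. "With high probability" means with probability tending to $1$ as $n\to\infty$. $\log$ is the natural logarithm. *)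

theory Defs
  imports "HOL-Probability.Probability"
begin

definition simple_graph :: "'a set \<Rightarrow> ('a \<Rightarrow> 'a \<Rightarrow> bool) \<Rightarrow> bool" where
  "simple_graph V E \<longleftrightarrow> finite V \<and> (\<forall>v. \<not> E v v) \<and> (\<forall>v w. E v w \<longrightarrow> E w v)"

definition nbhd :: "'a set \<Rightarrow> ('a \<Rightarrow> 'a \<Rightarrow> bool) \<Rightarrow> 'a \<Rightarrow> 'a set" where
  "nbhd V E v = {w \<in> V. E v w}"

(* The random choices: f (v,i) is the i-th choice of vertex v (i < k), each
   independent and uniform on the G-neighbourhood of v. *)
definition choices_pmf :: "'a set \<Rightarrow> ('a \<Rightarrow> 'a \<Rightarrow> bool) \<Rightarrow> nat \<Rightarrow> 'a \<Rightarrow> ('a \<times> nat \<Rightarrow> 'a) pmf" where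
  "choices_pmf V E k dflt = Pi_pmf (V \<times> {..<k}) dflt (\<lambda>(v,i). pmf_of_set (nbhd V E v))"

definition Gk_edge :: "nat \<Rightarrow> ('a \<times> nat \<Rightarrow> 'a) \<Rightarrow> 'a \<Rightarrow> 'a \<Rightarrow> bool" where
  "Gk_edge k f v w \<longleftrightarrow> (\<exists>i<k. f (v,i) = w \<or> f (w,i) = v)"

definition component :: "'a set \<Rightarrow> ('a \<Rightarrow> 'a \<Rightarrow> bool) \<Rightarrow> 'a \<Rightarrow> 'a set" where
  "component S R v = {w. (\<lambda>x y. x \<in> S \<and> y \<in> S \<and> R x y)\<^sup>*\<^sup>* v w}"

end

theory Submission
  imports Defs
begin

text \<open>
  If a component S of G_k', or of G_k' - A with |S| \<ge> 2, has fewer than cn vertices, then all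
  k|S| choices of its vertices land in S \<union> A \<union> L, a set of size |S| + O(log n). Every neighbourhood
  has at least (1/2 + \<epsilon>)n vertices, so a fixed S is closed in this sense with probability at most
  ((|S| + O(log n)) / ((1/2 + \<epsilon>)n))^(k|S|). A union bound over S and A leaves
  \<Sum>_s C(n,s) ((s + O(log n)) / ((1/2 + \<epsilon>)n))^(ks). For s \<ge> M log n the summand is at most
  (e 2^k (s/n)^(k-1))^s \<le> 2^(-s) \<le> n^(-k-1), because s/n < 1/(8e); for smaller s it is at most
  \<beta>^s with \<beta> = O((log n)^k / n^(k-1)). The sum over s \<ge> 1 is therefore O(\<beta> log n), and the
  sum over s \<ge> 2, multiplied by the n^(k-1) choices of A, is O(n^(k-1) \<beta>^2 log n); both tend to 0
  since k \<ge> 2.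
\<close>

section \<open>Estimates for the union-bound sum\<close>

lemma binomial_le_power_div_fact: "real (n choose s) \<le> real n ^ s / fact s"
proof -
  have "real ((n choose s) * fact s) \<le> real (n ^ s)"
    using binomial_fact_pow[of n s] by (simp only: of_nat_le_iff)
  then show ?thesis by (simp add: field_simps)
qed

lemma binomial_le_exp_ratio_power:
  assumes "1 \<le> s"
  shows "real (n choose s) \<le> (exp 1 * real n / real s) ^ s"
proof -
  have "real s ^ s / fact s \<le> exp (real s)"
    using sum_le_suminf[of "\<lambda>m. real s ^ m /\<^sub>R fact m" "{s}"] exp_converges[of "real s"]
    by (auto simp: sums_iff divide_inverse mult.commute)
  then have "1 / fact s \<le> exp (real s) / real s ^ s"
    using assms by (simp add: field_simps)
  then have "real n ^ s * (1 / fact s) \<le> real n ^ s * (exp (real s) / real s ^ s)"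
    by (rule mult_left_mono) simp
  then have "real n ^ s / fact s \<le> real n ^ s * (exp (real s) / real s ^ s)"
    by simp
  also have "\<dots> = (exp 1 * real n / real s) ^ s"
    by (simp add: power_divide power_mult_distrib flip: exp_of_nat_mult)
  finally show ?thesis
    using binomial_le_power_div_fact[of n s] by linarith
qed

lemma exp_div_mult_power_le_half:
  fixes y :: real
  assumes "2 \<le> k" "0 < y" "y \<le> 1 / (8 * exp 1)"
  shows "exp 1 / y * (2 * y) ^ k \<le> 1 / 2"
proof -
  define j where "j = k - 2"
  then have k: "k = j + 2"
    using assms(1) by simp
  have "2 * y \<le> (8 * exp 1) * y"
    using assms(2) exp_ge_add_one_self[of 1] by (intro mult_right_mono) auto
  also have "\<dots> \<le> 1"
    using assms(3) by (simp add: field_simps)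
  finally have "2 * y \<le> 1" .
  then have "(2 * y) ^ j \<le> 1"
    using assms(2) by (intro power_le_one) auto
  then have "exp 1 / y * (2 * y) ^ k = 4 * exp 1 * y * (2 * y) ^ j"
    using assms(2) by (simp add: k power_add field_simps)
  also have "\<dots> \<le> 4 * exp 1 * (1 / (8 * exp 1)) * 1"
    using assms(2,3) \<open>(2 * y) ^ j \<le> 1\<close> by (intro mult_mono) auto
  also have "\<dots> = 1 / 2"
    by simp
  finally show ?thesis .
qed

lemma half_power_le_inverse_power:
  assumes "1 \<le> n" "2 * real m * ln (real n) \<le> real s"
  shows "(1 / 2) ^ s \<le> 1 / real n ^ m"
proof -
  have "real s * (1 / 2) \<le> real s * ln 2"
    using ln2_ge_two_thirds by (intro mult_left_mono) auto
  then have "real m * ln (real n) \<le> real s * ln 2"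
    using assms(2) by linarith
  then have "exp (real m * ln (real n)) \<le> exp (real s * ln 2)"
    by simp
  then have "real n ^ m \<le> 2 ^ s"
    using assms(1) by (simp add: exp_of_nat_mult)
  then show ?thesis
    using assms(1) by (simp add: power_divide field_simps)
qed

(* The union bound for closed_set_event (below) when |V| = n, all degrees are at least d and |X| \<le> x. *)
definition closed_choice_bound :: "real \<Rightarrow> nat \<Rightarrow> real \<Rightarrow> nat \<Rightarrow> nat \<Rightarrow> real" where
  "closed_choice_bound d k x n s = real (n choose s) * ((real s + x) / d) ^ (k * s)"

lemma closed_choice_bound_le_power:
  assumes "1 \<le> s" "0 \<le> x" "0 < d" "exp 1 * real n / real s * ((real s + x) / d) ^ k \<le> b"
  shows "closed_choice_bound d k x n s \<le> b ^ s"
proof -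
  have "closed_choice_bound d k x n s \<le> (exp 1 * real n / real s) ^ s * ((real s + x) / d) ^ (k * s)"
    unfolding closed_choice_bound_def
    using binomial_le_exp_ratio_power[OF assms(1)] assms(2,3) by (intro mult_right_mono) auto
  also have "\<dots> = (exp 1 * real n / real s * ((real s + x) / d) ^ k) ^ s"
    by (simp only: power_mult power_mult_distrib)
  also have "\<dots> \<le> b ^ s"
    using assms(2-4) by (intro power_mono) auto
  finally show ?thesis .
qed

lemma closed_choice_bound_large_le:
  assumes "0 < \<epsilon>" "2 \<le> k" "1 \<le> s" "real s < 1 / (8 * exp 1) * real n"
    and "0 \<le> x" "x \<le> 2 * \<epsilon> * real s" "2 * real (k + 1) * ln (real n) \<le> real s"
  shows "closed_choice_bound ((1/2 + \<epsilon>) * real n) k x n s \<le> 1 / real n ^ (k + 1)"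
proof -
  have "0 < 1 / (8 * exp 1) * real n"
    using assms(3,4) by linarith
  then have n: "0 < real n"
    by (simp add: zero_less_divide_iff)
  define y where "y = real s / real n"
  have y: "0 < y" "y \<le> 1 / (8 * exp 1)"
    using assms(3,4) n by (auto simp: y_def field_simps)
  have "real s + x \<le> (1/2 + \<epsilon>) * (2 * real s)"
    using assms(6) by (simp add: algebra_simps)
  then have "(real s + x) / ((1/2 + \<epsilon>) * real n) \<le> (1/2 + \<epsilon>) * (2 * real s) / ((1/2 + \<epsilon>) * real n)"
    using assms(1) n by (intro divide_right_mono) auto
  also have "\<dots> = 2 * y"
    using assms(1) by (simp add: y_def)
  finally have ratio: "(real s + x) / ((1/2 + \<epsilon>) * real n) \<le> 2 * y" .
  have "exp 1 * real n / real s * ((real s + x) / ((1/2 + \<epsilon>) * real n)) ^ k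
      = exp 1 / y * ((real s + x) / ((1/2 + \<epsilon>) * real n)) ^ k"
    by (simp add: y_def)
  also have "\<dots> \<le> exp 1 / y * (2 * y) ^ k"
    using ratio assms(1,5) n y by (intro mult_left_mono power_mono) auto
  also have "\<dots> \<le> 1 / 2"
    using exp_div_mult_power_le_half[OF assms(2) y] .
  finally have "closed_choice_bound ((1/2 + \<epsilon>) * real n) k x n s \<le> (1 / 2) ^ s"
    using assms n by (intro closed_choice_bound_le_power) auto
  also have "\<dots> \<le> 1 / real n ^ (k + 1)"
    using assms(7) n by (intro half_power_le_inverse_power) auto
  finally show ?thesis .
qed

lemma closed_choice_bound_small_le:
  assumes "0 < \<epsilon>" "1 \<le> s" "0 < n" "0 \<le> x" "real s + x \<le> Q"
  shows "closed_choice_bound ((1/2 + \<epsilon>) * real n) k x n s \<le> (exp 1 * real n * (2 * Q / real n) ^ k) ^ s"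
proof -
  have n: "0 < real n" using assms(3) by simp
  have "(real s + x) / ((1/2 + \<epsilon>) * real n) \<le> Q / ((1/2 + \<epsilon>) * real n)"
    using assms n by (intro divide_right_mono) auto
  also have "\<dots> \<le> Q / (real n / 2)"
    using assms n by (intro divide_left_mono) auto
  also have "\<dots> = 2 * Q / real n"
    by simp
  finally have ratio: "(real s + x) / ((1/2 + \<epsilon>) * real n) \<le> 2 * Q / real n" .
  have "exp 1 * real n / real s \<le> exp 1 * real n"
    using assms(2) n by (simp add: field_simps)
  then have "exp 1 * real n / real s * ((real s + x) / ((1/2 + \<epsilon>) * real n)) ^ k
      \<le> exp 1 * real n * (2 * Q / real n) ^ k"
    using ratio assms n by (intro mult_mono power_mono) auto
  then show ?thesis
    using assms n by (intro closed_choice_bound_le_power) auto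
qed

lemma sum_cutoff_powers_le:
  fixes \<beta> X :: real
  assumes "0 \<le> \<beta>" "\<beta> \<le> 1" "1 \<le> j" "1 \<le> n" "0 \<le> X"
  shows "(\<Sum>s\<in>{j..n}. (if real s < X then \<beta> ^ s else 0) + 1 / real n ^ (k + 1)) \<le> \<beta> ^ j * X + 1 / real n ^ k"
proof -
  have "(\<Sum>s\<in>{j..n}. (if real s < X then \<beta> ^ s else 0)) \<le> (\<Sum>s\<in>{j..n}. (if real s < X then \<beta> ^ j else 0))"
    using assms(1,2) by (intro sum_mono) (auto intro: power_decreasing)
  also have "\<dots> = (\<Sum>s\<in>{s\<in>{j..n}. real s < X}. \<beta> ^ j)"
    by (rule sum.inter_filter[symmetric]) simp
  also have "\<dots> = \<beta> ^ j * real (card {s\<in>{j..n}. real s < X})"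
    by simp
  also have "\<dots> \<le> \<beta> ^ j * X"
  proof -
    have "{s\<in>{j..n}. real s < X} \<subseteq> {1..nat \<lfloor>X\<rfloor>}"
      using assms(3) by (auto simp: le_nat_floor)
    then have "real (card {s\<in>{j..n}. real s < X}) \<le> real (nat \<lfloor>X\<rfloor>)"
      using card_mono[of "{1..nat \<lfloor>X\<rfloor>}"] by fastforce
    also have "\<dots> \<le> X"
      using assms(5) by linarith
    finally show ?thesis
      using assms(1) by (intro mult_left_mono) auto
  qed
  finally have powers: "(\<Sum>s\<in>{j..n}. (if real s < X then \<beta> ^ s else 0)) \<le> \<beta> ^ j * X" .
  have "(\<Sum>s\<in>{j..n}. 1 / real n ^ (k + 1)) = real (card {j..n}) / real n ^ (k + 1)"
    by simp
  also have "\<dots> \<le> real n / real n ^ (k + 1)"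
    using assms(3) by (intro divide_right_mono) auto
  also have "\<dots> = 1 / real n ^ k"
    using assms(4) by simp
  finally show ?thesis
    using powers by (simp add: sum.distrib)
qed

lemma sum_closed_choice_bound_le:
  fixes \<epsilon> x M \<beta> :: real
  assumes "0 < \<epsilon>" "2 \<le> k" "1 \<le> j" "0 < n" "0 \<le> x" "x \<le> 2 * \<epsilon> * (M * ln (real n))"
    and "2 * real (k + 1) \<le> M"
    and "exp 1 * real n * (2 * (M * ln (real n) + x) / real n) ^ k \<le> \<beta>" "\<beta> \<le> 1"
  shows "(\<Sum>s\<in>{s \<in> {j..n}. real s < 1 / (8 * exp 1) * real n}.
            closed_choice_bound ((1/2 + \<epsilon>) * real n) k x n s)
         \<le> \<beta> ^ j * (M * ln (real n)) + 1 / real n ^ k"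
proof -
  let ?X = "M * ln (real n)"
  let ?g = "\<lambda>s. (if real s < ?X then \<beta> ^ s else 0) + 1 / real n ^ (k + 1)"
  have X: "0 \<le> ?X"
    using assms(4,7) by simp
  have "0 \<le> exp 1 * real n * (2 * (?X + x) / real n) ^ k"
    using X assms(5) by simp
  then have \<beta>: "0 \<le> \<beta>"
    using assms(8) by linarith
  have "closed_choice_bound ((1/2 + \<epsilon>) * real n) k x n s \<le> ?g s"
    if s: "1 \<le> s" "real s < 1 / (8 * exp 1) * real n" for s
  proof (cases "real s < ?X")
    case True
    have "closed_choice_bound ((1/2 + \<epsilon>) * real n) k x n s
        \<le> (exp 1 * real n * (2 * (?X + x) / real n) ^ k) ^ s"
      using True assms s by (intro closed_choice_bound_small_le) auto
    also have "\<dots> \<le> \<beta> ^ s"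
      using assms(4,5,8) X by (intro power_mono) auto
    moreover have "0 \<le> 1 / real n ^ (k + 1)"
      by simp
    ultimately show ?thesis
      unfolding if_P[OF True] by linarith
  next
    case False
    have "2 * real (k + 1) * ln (real n) \<le> ?X"
      using assms(4,7) by (intro mult_right_mono) auto
    moreover have "2 * \<epsilon> * ?X \<le> 2 * \<epsilon> * real s"
      using assms(1) False by (intro mult_left_mono) auto
    then have "x \<le> 2 * \<epsilon> * real s"
      using assms(6) by linarith
    ultimately have "closed_choice_bound ((1/2 + \<epsilon>) * real n) k x n s \<le> 1 / real n ^ (k + 1)"
      using False assms s by (intro closed_choice_bound_large_le) auto
    then show ?thesis
      using False by simp
  qed
  then have "(\<Sum>s\<in>{s \<in> {j..n}. real s < 1 / (8 * exp 1) * real n}.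
               closed_choice_bound ((1/2 + \<epsilon>) * real n) k x n s)
           \<le> (\<Sum>s\<in>{s \<in> {j..n}. real s < 1 / (8 * exp 1) * real n}. ?g s)"
    using assms(3) by (intro sum_mono) auto
  also have "\<dots> \<le> (\<Sum>s\<in>{j..n}. ?g s)"
    using \<beta> by (intro sum_mono2) auto
  also have "\<dots> \<le> \<beta> ^ j * ?X + 1 / real n ^ k"
    using assms \<beta> X by (intro sum_cutoff_powers_le) auto
  finally show ?thesis .
qed

lemma ln_power_over_power_tendsto_zero:
  assumes "1 \<le> m"
  shows "(\<lambda>n. ln (real n) ^ j / real n ^ m) \<longlonglongrightarrow> 0"
proof -
  define a :: real where "a = 1 / (2 * real (Suc j))"
  have a: "0 < a" "real j * a \<le> 1 / 2"
    by (simp_all add: a_def field_simps)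
  have bound: "ln (real n) ^ j / real n ^ m \<le> 1 / a ^ j * real n powr (- 1 / 2)" if n: "1 \<le> n" for n
  proof -
    have "ln (real n) ^ j \<le> (real n powr a / a) ^ j"
      using n a by (intro power_mono ln_powr_bound) auto
    also have "\<dots> = real n powr (real j * a) / a ^ j"
      using n by (simp add: power_divide powr_power)
    also have "\<dots> \<le> real n powr (1 / 2) / a ^ j"
      using n a by (intro divide_right_mono powr_mono) auto
    finally have "ln (real n) ^ j \<le> real n powr (1 / 2) / a ^ j" .
    moreover have "real n \<le> real n ^ m"
      using n assms by (simp add: self_le_power)
    ultimately have "ln (real n) ^ j / real n ^ m \<le> real n powr (1 / 2) / a ^ j / real n"
      using n a by (intro frac_le) auto
    also have "\<dots> = 1 / a ^ j * (real n powr (1 / 2) / real n)"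
      by simp
    also have "real n powr (1 / 2) / real n = real n powr (- 1 / 2)"
      using n by (simp add: powr_minus_divide field_simps flip: powr_add)
    finally show ?thesis .
  qed
  have lim: "(\<lambda>n. 1 / a ^ j * real n powr (- 1 / 2)) \<longlonglongrightarrow> 0"
    by (intro tendsto_mult_right_zero tendsto_neg_powr filterlim_real_sequentially) simp
  show ?thesis
  proof (rule tendsto_sandwich[OF _ _ tendsto_const lim])
    show "\<forall>\<^sub>F n in sequentially. 0 \<le> ln (real n) ^ j / real n ^ m"
      using eventually_ge_at_top[of 1] by eventually_elim simp
    show "\<forall>\<^sub>F n in sequentially. ln (real n) ^ j / real n ^ m \<le> 1 / a ^ j * real n powr (- 1 / 2)"
      using eventually_ge_at_top[of 1] by eventually_elim (rule bound)
  qed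
qed

lemma union_bound_error_tendsto_zero:
  fixes C M :: real and \<beta> :: "nat \<Rightarrow> real"
  assumes "2 \<le> k" and \<beta>: "\<And>n. \<beta> n = C * (ln (real n) ^ k / real n ^ (k - 1))"
  shows "\<beta> \<longlonglongrightarrow> 0"
    and "(\<lambda>n. \<beta> n * (M * ln (real n)) + 1 / real n ^ k
               + real n ^ (k - 1) * (\<beta> n ^ 2 * (M * ln (real n)) + 1 / real n ^ k)) \<longlonglongrightarrow> 0"
proof -
  show "\<beta> \<longlonglongrightarrow> 0"
    unfolding \<beta> using assms(1) by (intro tendsto_mult_right_zero ln_power_over_power_tendsto_zero) auto
  have "(\<lambda>n. C * M * (ln (real n) ^ (k + 1) / real n ^ (k - 1)) + ln (real n) ^ 0 / real n ^ k
            + C\<^sup>2 * M * (ln (real n) ^ (2 * k + 1) / real n ^ (k - 1)) + ln (real n) ^ 0 / real n ^ 1)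
        \<longlonglongrightarrow> 0"
    using assms(1) by (intro tendsto_add_zero tendsto_mult_right_zero ln_power_over_power_tendsto_zero) auto
  moreover have "\<forall>\<^sub>F n in sequentially.
      C * M * (ln (real n) ^ (k + 1) / real n ^ (k - 1)) + ln (real n) ^ 0 / real n ^ k
      + C\<^sup>2 * M * (ln (real n) ^ (2 * k + 1) / real n ^ (k - 1)) + ln (real n) ^ 0 / real n ^ 1
      = \<beta> n * (M * ln (real n)) + 1 / real n ^ k
        + real n ^ (k - 1) * (\<beta> n ^ 2 * (M * ln (real n)) + 1 / real n ^ k)"
    using eventually_gt_at_top[of 0]
  proof eventually_elim
    case (elim n)
    have "real n ^ k = real n * real n ^ (k - 1)"
      using assms(1) by (cases k) auto
    then show ?case
      using elim by (simp add: \<beta> field_simps power2_eq_square power_add mult_2 mult_2_right)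
  qed
  ultimately show "(\<lambda>n. \<beta> n * (M * ln (real n)) + 1 / real n ^ k
               + real n ^ (k - 1) * (\<beta> n ^ 2 * (M * ln (real n)) + 1 / real n ^ k)) \<longlonglongrightarrow> 0"
    by (rule Lim_transform_eventually)
qed

lemma closed_choice_bounds_eventually_le:
  fixes \<epsilon> b \<delta> :: real
  assumes "0 < \<epsilon>" "2 \<le> k" "0 \<le> b" "0 < \<delta>"
  shows "\<forall>\<^sub>F n in sequentially. \<forall>x. 0 \<le> x \<and> x \<le> b * ln (real n) \<longrightarrow>
    (\<Sum>s\<in>{s \<in> {1..n}. real s < 1 / (8 * exp 1) * real n}. closed_choice_bound ((1/2 + \<epsilon>) * real n) k x n s)
    + real n ^ (k - 1) * (\<Sum>s\<in>{s \<in> {2..n}. real s < 1 / (8 * exp 1) * real n}.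
                             closed_choice_bound ((1/2 + \<epsilon>) * real n) k x n s)
    \<le> \<delta>"
proof -
  define M where "M = 2 * real (k + 1) + b / (2 * \<epsilon>)"
  define P where "P = M + b"
  define C where "C = exp 1 * (2 * P) ^ k"
  define \<beta> where "\<beta> n = C * (ln (real n) ^ k / real n ^ (k - 1))" for n :: nat
  define err where "err n = \<beta> n * (M * ln (real n)) + 1 / real n ^ k
                          + real n ^ (k - 1) * (\<beta> n ^ 2 * (M * ln (real n)) + 1 / real n ^ k)" for n :: nat
  have M: "2 * real (k + 1) \<le> M" "b \<le> 2 * \<epsilon> * M"
    using assms(1,3) by (auto simp: M_def field_simps)
  note \<beta>_lim = union_bound_error_tendsto_zero(1)[OF assms(2) \<beta>_def]
  note err_lim = union_bound_error_tendsto_zero(2)[OF assms(2) \<beta>_def, where M = M, folded err_def]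
  have "\<forall>\<^sub>F n in sequentially. 1 \<le> n \<and> \<beta> n < 1 \<and> err n < \<delta>"
    using eventually_ge_at_top[of 1] order_tendstoD(2)[OF \<beta>_lim zero_less_one]
      order_tendstoD(2)[OF err_lim assms(4)]
    by eventually_elim auto
  then show ?thesis
  proof (rule eventually_mono, intro allI impI)
    fix n x assume n: "1 \<le> n \<and> \<beta> n < 1 \<and> err n < \<delta>" and x: "0 \<le> x \<and> x \<le> b * ln (real n)"
    have ln: "0 \<le> ln (real n)"
      using n by simp
    have "M * ln (real n) + x \<le> P * ln (real n)"
      using x by (simp add: P_def distrib_right)
    then have "exp 1 * real n * (2 * (M * ln (real n) + x) / real n) ^ k
        \<le> exp 1 * real n * (2 * (P * ln (real n)) / real n) ^ k"
      using n x M ln assms(3) by (intro mult_left_mono power_mono divide_right_mono) auto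
    also have "\<dots> = \<beta> n"
    proof -
      have "real n ^ k = real n * real n ^ (k - 1)"
        using assms(2) by (cases k) auto
      moreover have "0 < n"
        using n by simp
      ultimately show ?thesis
        unfolding \<beta>_def C_def by (simp add: power_mult_distrib power_divide)
    qed
    finally have base: "exp 1 * real n * (2 * (M * ln (real n) + x) / real n) ^ k \<le> \<beta> n" .
    have x_le: "x \<le> 2 * \<epsilon> * (M * ln (real n))"
      using x M(2) ln mult_right_mono[OF M(2) ln] by (simp add: mult.assoc)
    let ?S = "\<lambda>j. \<Sum>s\<in>{s \<in> {j..n}. real s < 1 / (8 * exp 1) * real n}.
                   closed_choice_bound ((1/2 + \<epsilon>) * real n) k x n s"
    have "?S 1 \<le> \<beta> n ^ 1 * (M * ln (real n)) + 1 / real n ^ k"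
      using n x x_le M base assms by (intro sum_closed_choice_bound_le) auto
    moreover have "?S 2 \<le> \<beta> n ^ 2 * (M * ln (real n)) + 1 / real n ^ k"
      using n x x_le M base assms by (intro sum_closed_choice_bound_le) auto
    then have "real n ^ (k - 1) * ?S 2 \<le> real n ^ (k - 1) * (\<beta> n ^ 2 * (M * ln (real n)) + 1 / real n ^ k)"
      by (rule mult_left_mono) simp
    ultimately show "?S 1 + real n ^ (k - 1) * ?S 2 \<le> \<delta>"
      using n unfolding err_def power_one_right by linarith
  qed
qed

section \<open>Small components are closed under the random choices\<close>

lemma component_subset:
  assumes "v \<in> W"
  shows "component W R v \<subseteq> W"
proof
  fix u assume "u \<in> component W R v"
  then have "(\<lambda>x y. x \<in> W \<and> y \<in> W \<and> R x y)\<^sup>*\<^sup>* v u"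
    by (simp add: component_def)
  then show "u \<in> W"
    using assms by (induction rule: rtranclp_induct) auto
qed

lemma component_refl: "v \<in> component W R v"
  by (simp add: component_def)

lemma component_step:
  assumes "u \<in> component W R v" "u \<in> W" "w \<in> W" "R u w"
  shows "w \<in> component W R v"
  using assms unfolding component_def by (auto intro: rtranclp.rtrancl_into_rtrancl)

definition choices_within :: "nat \<Rightarrow> ('a \<times> nat \<Rightarrow> 'a) \<Rightarrow> 'a set \<Rightarrow> 'a set \<Rightarrow> bool" where
  "choices_within k f S T \<longleftrightarrow> (\<forall>u\<in>S. \<forall>i<k. f (u, i) \<in> T)"

lemma choice_in_nbhd:
  assumes "finite V" "f \<in> set_pmf (choices_pmf V E k dflt)" "u \<in> V" "i < k" "nbhd V E u \<noteq> {}"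
  shows "f (u, i) \<in> nbhd V E u"
proof -
  have "f \<in> PiE_dflt (V \<times> {..<k}) dflt (set_pmf \<circ> (\<lambda>(v, i). pmf_of_set (nbhd V E v)))"
    using set_Pi_pmf_subset'[of "V \<times> {..<k}" dflt "\<lambda>(v, i). pmf_of_set (nbhd V E v)"] assms(1,2)
    unfolding choices_pmf_def by auto
  then have "f (u, i) \<in> set_pmf (pmf_of_set (nbhd V E u))"
    using assms(3,4) unfolding PiE_dflt_def by auto
  moreover have "finite (nbhd V E u)"
    using assms(1) by (simp add: nbhd_def)
  ultimately show ?thesis
    using assms(5) by simp
qed

lemma prob_choices_within:
  assumes "finite V" "S \<subseteq> V" "finite T" "0 < d" "\<forall>u\<in>V. d \<le> real (card (nbhd V E u))"
  shows "measure_pmf.prob (choices_pmf V E k dflt) {f. choices_within k f S T}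
           \<le> (real (card T) / d) ^ (k * card S)"
proof -
  let ?B = "\<lambda>x :: 'a \<times> nat. if fst x \<in> S then T else UNIV"
  let ?q = "\<lambda>x :: 'a \<times> nat. pmf_of_set (nbhd V E (fst x))"
  have fin: "finite (V \<times> {..<k})"
    using assms(1) by simp
  have "{f. choices_within k f S T} = Pi (V \<times> {..<k}) ?B"
    using assms(2) by (auto simp: choices_within_def Pi_def)
  moreover have "choices_pmf V E k dflt = Pi_pmf (V \<times> {..<k}) dflt ?q"
    unfolding choices_pmf_def by (simp add: case_prod_unfold)
  ultimately have "measure_pmf.prob (choices_pmf V E k dflt) {f. choices_within k f S T}
      = (\<Prod>x\<in>V \<times> {..<k}. measure_pmf.prob (?q x) (?B x))"
    by (simp add: measure_Pi_pmf_Pi[OF fin])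
  also have "\<dots> \<le> (\<Prod>x\<in>V \<times> {..<k}. if fst x \<in> S then real (card T) / d else 1)"
  proof (intro prod_mono conjI)
    fix x assume "x \<in> V \<times> {..<k}"
    then have nbhd: "d \<le> real (card (nbhd V E (fst x)))" "finite (nbhd V E (fst x))"
      using assms(1,5) by (auto simp: nbhd_def)
    then have "nbhd V E (fst x) \<noteq> {}"
      using assms(4) by auto
    moreover have "real (card (nbhd V E (fst x) \<inter> T)) / real (card (nbhd V E (fst x))) \<le> real (card T) / d"
      using nbhd assms(3,4) by (intro frac_le) (auto intro: card_mono)
    ultimately show "measure_pmf.prob (?q x) (?B x) \<le> (if fst x \<in> S then real (card T) / d else 1)"
      using nbhd by (auto simp: measure_pmf_of_set)
  qed simp
  also have "\<dots> = (\<Prod>x\<in>{x \<in> V \<times> {..<k}. fst x \<in> S}. real (card T) / d)"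
    by (rule prod.inter_filter[OF fin, symmetric])
  also have "{x \<in> V \<times> {..<k}. fst x \<in> S} = S \<times> {..<k}"
    using assms(2) by auto
  also have "(\<Prod>x\<in>S \<times> {..<k}. real (card T) / d) = (real (card T) / d) ^ (k * card S)"
    by (simp add: card_cartesian_product mult.commute)
  finally show ?thesis .
qed

lemma choices_within_component:
  assumes "finite V" "\<forall>u\<in>V. nbhd V E u \<noteq> {}" "f \<in> set_pmf (choices_pmf V E k dflt)" "v \<in> V - X"
  defines "S \<equiv> component (V - X) (Gk_edge k f) v"
  shows "choices_within k f S (S \<union> X)"
  unfolding choices_within_def
proof (intro ballI allI impI)
  fix u i assume u: "u \<in> S" and i: "i < k"
  then have "u \<in> V - X"
    using component_subset[OF assms(4)] unfolding S_def by blast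
  then have "f (u, i) \<in> V"
    using choice_in_nbhd[OF assms(1,3) _ i] assms(2) by (auto simp: nbhd_def)
  moreover have "Gk_edge k f u (f (u, i))"
    using i unfolding Gk_edge_def by auto
  ultimately show "f (u, i) \<in> S \<union> X"
    using component_step[of u "V - X" "Gk_edge k f" v] u \<open>u \<in> V - X\<close> unfolding S_def by auto
qed

definition closed_set_event :: "'a set \<Rightarrow> nat \<Rightarrow> 'a set \<Rightarrow> nat \<Rightarrow> ('a \<times> nat \<Rightarrow> 'a) set" where
  "closed_set_event V k X s = {f. \<exists>S\<subseteq>V. card S = s \<and> choices_within k f S (S \<union> X)}"

lemma prob_closed_set_event_le:
  assumes "finite V" "finite X" "real (card X) \<le> x" "0 < d" "\<forall>u\<in>V. d \<le> real (card (nbhd V E u))"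
  shows "measure_pmf.prob (choices_pmf V E k dflt) (closed_set_event V k X s)
           \<le> closed_choice_bound d k x (card V) s"
proof -
  let ?p = "choices_pmf V E k dflt"
  let ?SS = "{S. S \<subseteq> V \<and> card S = s}"
  have "measure_pmf.prob ?p (closed_set_event V k X s)
      = measure_pmf.prob ?p (\<Union>S\<in>?SS. {f. choices_within k f S (S \<union> X)})"
    unfolding closed_set_event_def by (rule arg_cong[where f = "measure_pmf.prob ?p"]) blast
  also have "\<dots> \<le> (\<Sum>S\<in>?SS. measure_pmf.prob ?p {f. choices_within k f S (S \<union> X)})"
    using assms(1) by (intro measure_pmf.finite_measure_subadditive_finite) auto
  also have "\<dots> \<le> (\<Sum>S\<in>?SS. ((real s + x) / d) ^ (k * s))"
  proof (intro sum_mono)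
    fix S assume S: "S \<in> ?SS"
    then have "finite S"
      using assms(1) finite_subset by blast
    then have "real (card (S \<union> X)) \<le> real s + x"
      using S assms(3) card_Un_le[of S X] by simp
    moreover have "card S = s"
      using S by simp
    ultimately have "(real (card (S \<union> X)) / d) ^ (k * card S) \<le> ((real s + x) / d) ^ (k * s)"
      using assms(4) by (auto intro!: power_mono divide_right_mono)
    moreover have "measure_pmf.prob ?p {f. choices_within k f S (S \<union> X)}
        \<le> (real (card (S \<union> X)) / d) ^ (k * card S)"
      using S assms(2) \<open>finite S\<close> by (intro prob_choices_within assms(1,4,5)) auto
    ultimately show "measure_pmf.prob ?p {f. choices_within k f S (S \<union> X)} \<le> ((real s + x) / d) ^ (k * s)"
      by linarith
  qed
  also have "\<dots> = closed_choice_bound d k x (card V) s"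
    using assms(1) by (simp add: closed_choice_bound_def n_subsets)
  finally show ?thesis .
qed

lemma prob_UN_closed_set_event_le:
  assumes "finite V" "finite X" "real (card X) \<le> x" "0 < d" "\<forall>u\<in>V. d \<le> real (card (nbhd V E u))"
    and "finite I"
  shows "measure_pmf.prob (choices_pmf V E k dflt) (\<Union>s\<in>I. closed_set_event V k X s)
           \<le> (\<Sum>s\<in>I. closed_choice_bound d k x (card V) s)"
proof -
  have "measure_pmf.prob (choices_pmf V E k dflt) (\<Union>s\<in>I. closed_set_event V k X s)
      \<le> (\<Sum>s\<in>I. measure_pmf.prob (choices_pmf V E k dflt) (closed_set_event V k X s))"
    using assms(6) by (rule measure_pmf.finite_measure_subadditive_finite) auto
  also have "\<dots> \<le> (\<Sum>s\<in>I. closed_choice_bound d k x (card V) s)"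
    using assms(1-5) by (intro sum_mono prob_closed_set_event_le)
  finally show ?thesis .
qed

lemma small_component_closed:
  assumes "finite V" "\<forall>u\<in>V. nbhd V E u \<noteq> {}" "f \<in> set_pmf (choices_pmf V E k dflt)" "v \<in> V - X"
    and "j \<le> card (component (V - X) (Gk_edge k f) v)"
    and "real (card (component (V - X) (Gk_edge k f) v)) < c * real (card V)"
  shows "f \<in> (\<Union>s\<in>{s \<in> {j..card V}. real s < c * real (card V)}. closed_set_event V k X s)"
proof (rule UN_I)
  let ?S = "component (V - X) (Gk_edge k f) v"
  have "?S \<subseteq> V"
    using component_subset[OF assms(4)] by blast
  then have "card ?S \<le> card V"
    using assms(1) by (rule card_mono[rotated])
  then show "card ?S \<in> {s \<in> {j..card V}. real s < c * real (card V)}"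
    using assms(5,6) by simp
  show "f \<in> closed_set_event V k X (card ?S)"
    unfolding closed_set_event_def
    using \<open>?S \<subseteq> V\<close> choices_within_component[OF assms(1-4)] by blast
qed

lemma small_components_closed_set_events:
  assumes "finite V" "\<forall>u\<in>V. nbhd V E u \<noteq> {}" "f \<in> set_pmf (choices_pmf V E k dflt)"
    and "\<not> ((\<forall>v\<in>V - L. c * real (card V) \<le> real (card (component (V - L) (Gk_edge k f) v))) \<and>
           (\<forall>A. A \<subseteq> V \<longrightarrow> card A = k - 1 \<longrightarrow> (\<forall>v\<in>V - L - A.
              component (V - L - A) (Gk_edge k f) v = {v} \<or>
              c * real (card V) \<le> real (card (component (V - L - A) (Gk_edge k f) v)))))"
  shows "f \<in> (\<Union>s\<in>{s \<in> {1..card V}. real s < c * real (card V)}. closed_set_event V k L s)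
           \<union> (\<Union>A\<in>{A. A \<subseteq> V \<and> card A = k - 1}.
                \<Union>s\<in>{s \<in> {2..card V}. real s < c * real (card V)}. closed_set_event V k (A \<union> L) s)"
proof -
  have finite_component: "finite (component (V - X) (Gk_edge k f) v)" if "v \<in> V - X" for X v
    using component_subset[OF that] assms(1) finite_subset by blast
  from assms(4) consider
      (connected) v where "v \<in> V - L" "real (card (component (V - L) (Gk_edge k f) v)) < c * real (card V)"
    | (cut) A v where "A \<subseteq> V" "card A = k - 1" "v \<in> V - L - A"
        "component (V - L - A) (Gk_edge k f) v \<noteq> {v}"
        "real (card (component (V - L - A) (Gk_edge k f) v)) < c * real (card V)"
    by (auto simp: not_le)
  then show ?thesis
  proof cases
    case connected
    then have "0 < card (component (V - L) (Gk_edge k f) v)"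
      using finite_component[OF connected(1)] component_refl[of v "V - L" "Gk_edge k f"]
      by (auto simp: card_gt_0_iff)
    then have "f \<in> (\<Union>s\<in>{s \<in> {1..card V}. real s < c * real (card V)}. closed_set_event V k L s)"
      using small_component_closed[OF assms(1-3) connected(1) _ connected(2)] by simp
    then show ?thesis
      by (rule UnI1)
  next
    case cut
    have "V - L - A = V - (A \<union> L)"
      by blast
    note cut = cut[unfolded this]
    let ?S = "component (V - (A \<union> L)) (Gk_edge k f) v"
    obtain w where "w \<in> ?S" "w \<noteq> v"
      using cut(4) component_refl[of v] by blast
    then have "card {v, w} \<le> card ?S"
      using finite_component[OF cut(3)] component_refl[of v] by (intro card_mono) auto
    then have "2 \<le> card ?S"
      using \<open>w \<noteq> v\<close> by simp
    then have "f \<in> (\<Union>s\<in>{s \<in> {2..card V}. real s < c * real (card V)}. closed_set_event V k (A \<union> L) s)"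
      using small_component_closed[OF assms(1-3) cut(3) _ cut(5)] by simp
    then show ?thesis
      using cut(1,2) by (intro UnI2 UN_I[of A]) auto
  qed
qed

lemma card_subsets_le_power:
  assumes "finite V"
  shows "real (card {A. A \<subseteq> V \<and> card A = m}) \<le> real (card V) ^ m"
proof -
  have "real (card {A. A \<subseteq> V \<and> card A = m}) \<le> real (card V) ^ m / fact m"
    using binomial_le_power_div_fact[of "card V" m] assms by (simp add: n_subsets)
  also have "\<dots> \<le> real (card V) ^ m"
    by (simp add: divide_le_eq fact_ge_1 mult_le_cancel_left1)
  finally show ?thesis .
qed

lemma prob_large_components_ge:
  fixes V L :: "'a set" and c d x :: real
  assumes V: "finite V" "card V = n" and d: "0 < d" "\<forall>u\<in>V. d \<le> real (card (nbhd V E u))"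
    and L: "L \<subseteq> V" "real (k - 1 + card L) \<le> x"
  shows "1 - ((\<Sum>s\<in>{s \<in> {1..n}. real s < c * real n}. closed_choice_bound d k x n s)
              + real n ^ (k - 1) * (\<Sum>s\<in>{s \<in> {2..n}. real s < c * real n}. closed_choice_bound d k x n s))
         \<le> measure_pmf.prob (choices_pmf V E k dflt)
             {f. (\<forall>v\<in>V - L. c * real n \<le> real (card (component (V - L) (Gk_edge k f) v))) \<and>
                 (\<forall>A. A \<subseteq> V \<longrightarrow> card A = k - 1 \<longrightarrow> (\<forall>v\<in>V - L - A.
                    component (V - L - A) (Gk_edge k f) v = {v} \<or>
                    c * real n \<le> real (card (component (V - L - A) (Gk_edge k f) v))))}"
    (is "1 - (?bound1 + _ * ?bound2) \<le> measure_pmf.prob ?p ?good")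
proof -
  define I where "I j = {s \<in> {j..n}. real s < c * real n}" for j
  define AA where "AA = {A. A \<subseteq> V \<and> card A = k - 1}"
  let ?B1 = "\<Union>s\<in>I 1. closed_set_event V k L s"
  let ?B2 = "\<Union>A\<in>AA. \<Union>s\<in>I 2. closed_set_event V k (A \<union> L) s"
  have union_le: "measure_pmf.prob ?p (\<Union>s\<in>I j. closed_set_event V k X s) \<le> (\<Sum>s\<in>I j. closed_choice_bound d k x n s)"
    if "finite X" "card X \<le> k - 1 + card L" for X j
  proof -
    have "real (card X) \<le> x"
      using that(2) L(2) by (meson of_nat_le_iff order_trans)
    then show ?thesis
      using prob_UN_closed_set_event_le[OF V(1) that(1) _ d] V(2) by (simp add: I_def)
  qed
  have nonempty: "\<forall>u\<in>V. nbhd V E u \<noteq> {}"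
  proof
    fix u assume "u \<in> V"
    then have "0 < real (card (nbhd V E u))"
      using d by (meson less_le_trans)
    then show "nbhd V E u \<noteq> {}"
      by auto
  qed
  have "(UNIV - ?good) \<inter> set_pmf ?p \<subseteq> ?B1 \<union> ?B2"
  proof
    fix f assume f: "f \<in> (UNIV - ?good) \<inter> set_pmf ?p"
    then have "f \<in> set_pmf ?p"
      by simp
    from small_components_closed_set_events[OF V(1) nonempty this, where L = L and c = c] f V(2)
    show "f \<in> ?B1 \<union> ?B2"
      unfolding I_def AA_def by simp
  qed
  then have "measure_pmf.prob ?p ((UNIV - ?good) \<inter> set_pmf ?p) \<le> measure_pmf.prob ?p (?B1 \<union> ?B2)"
    by (rule measure_pmf.finite_measure_mono) simp
  then have "measure_pmf.prob ?p (UNIV - ?good) \<le> measure_pmf.prob ?p (?B1 \<union> ?B2)"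
    by (simp add: measure_Int_set_pmf)
  also have "\<dots> \<le> measure_pmf.prob ?p ?B1 + measure_pmf.prob ?p ?B2"
    by (rule measure_Un_le) auto
  also have "measure_pmf.prob ?p ?B1 \<le> ?bound1"
    using union_le[of L 1] L(1) V(1) finite_subset unfolding I_def by auto
  also have "measure_pmf.prob ?p ?B2 \<le> real n ^ (k - 1) * ?bound2"
  proof -
    have "measure_pmf.prob ?p ?B2 \<le> (\<Sum>A\<in>AA. measure_pmf.prob ?p (\<Union>s\<in>I 2. closed_set_event V k (A \<union> L) s))"
      using V(1) by (intro measure_pmf.finite_measure_subadditive_finite) (auto simp: AA_def)
    also have "\<dots> \<le> (\<Sum>A\<in>AA. ?bound2)"
    proof (intro sum_mono)
      fix A assume "A \<in> AA"
      then have "finite (A \<union> L)" "card (A \<union> L) \<le> k - 1 + card L"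
        using V(1) L(1) card_Un_le[of A L] finite_subset unfolding AA_def by auto
      then show "measure_pmf.prob ?p (\<Union>s\<in>I 2. closed_set_event V k (A \<union> L) s) \<le> ?bound2"
        using union_le unfolding I_def by blast
    qed
    also have "\<dots> \<le> real n ^ (k - 1) * ?bound2"
      using card_subsets_le_power[OF V(1), of "k - 1"] V(2) d(1) L(2)
      by (auto simp: AA_def closed_choice_bound_def intro!: mult_right_mono sum_nonneg)
    finally show ?thesis .
  qed
  finally have "measure_pmf.prob ?p (UNIV - ?good) \<le> ?bound1 + real n ^ (k - 1) * ?bound2"
    by simp
  then show ?thesis
    using measure_pmf.prob_compl[of ?good ?p] by simp
qed

theorem lemma2:
  fixes \<epsilon> :: real and k :: nat
  assumes "\<epsilon> > 0" and "k \<ge> 2"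
  shows "\<forall>\<delta>>0. \<exists>N. \<forall>n\<ge>N. \<forall>(E :: nat \<Rightarrow> nat \<Rightarrow> bool) (L :: nat set).
     simple_graph {..<n} E \<longrightarrow>
     (\<forall>v\<in>{..<n}. real (card (nbhd {..<n} E v)) \<ge> (1/2 + \<epsilon>) * real n) \<longrightarrow>
     L \<subseteq> {..<n} \<longrightarrow>
     real (card L) \<le> (12 / \<epsilon>) * ln (real n) \<longrightarrow>
     (\<forall>u\<in>{..<n} - L. \<forall>w\<in>{..<n} - L. u \<noteq> w \<longrightarrow>
        real (card {x \<in> L. E u x \<and> E w x}) \<ge> 12 * ln (real n)) \<longrightarrow>
     measure_pmf.prob (choices_pmf {..<n} E k 0)
       {f. (\<forall>v\<in>{..<n} - L.
              real (card (component ({..<n} - L) (Gk_edge k f) v)) \<ge> (1 / (8 * exp 1)) * real n)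
         \<and> (\<forall>A. A \<subseteq> {..<n} \<longrightarrow> card A = k - 1 \<longrightarrow>
              (\<forall>v\<in>{..<n} - L - A.
                 component ({..<n} - L - A) (Gk_edge k f) v = {v} \<or>
                 real (card (component ({..<n} - L - A) (Gk_edge k f) v)) \<ge> (1 / (8 * exp 1)) * real n))}
       \<ge> 1 - \<delta>"
proof (intro allI impI, goal_cases)
  case (1 \<delta>)
  have b: "0 \<le> real k + 12 / \<epsilon>"
    using assms(1) by simp
  show ?case
    unfolding eventually_sequentially[symmetric]
    using eventually_ge_at_top[of 3] closed_choice_bounds_eventually_le[OF assms b 1]
  proof eventually_elim
    case (elim n)
    show ?case
    proof (intro allI impI, goal_cases)
      case (1 E L)
      have "1 \<le> ln (real n)"
        using exp_le elim(1) by (subst ln_ge_iff) auto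
      then have "real k * 1 \<le> real k * ln (real n)"
        by (intro mult_left_mono) auto
      then have "real (k - 1) \<le> real k * ln (real n)"
        by simp
      then have "real (k - 1 + card L) \<le> (real k + 12 / \<epsilon>) * ln (real n)"
        using 1(4) by (simp add: distrib_right)
      moreover have "0 < (1/2 + \<epsilon>) * real n"
        using assms(1) elim(1) by simp
      ultimately show ?case
        using prob_large_components_ge[OF finite_lessThan card_lessThan _ 1(2,3) order.refl,
            where c = "1 / (8 * exp 1)" and dflt = 0 and k = k] elim(2)
        by (auto dest!: spec[of _ "real (k - 1 + card L)"])
    qed
  qed
qed

end
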